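(* Fix $(\vartheta,\kappa)\in(0,1)^2$ with $\kappa>1-\vartheta$, $r>0$, $a\ge1$, an integer $m_0\ge1$ and $c_0>0$; let $g=g(m_0,\vartheta,r)$. Consider $Y=X\beta+\sigma z$ with $\beta$ following ARW$(\vartheta,r,a,\mu)$ and $X$ following RD$(\vartheta,\kappa,\Omega)$, with $\Omega\in\mathcal M_p(c_0,g)$ for sufficiently large $p$. For each $1\le j\le p$ let $(V_{0j}^*,V_{1j}^* )$ be the minimizing pair of $\eta(V_0,V_1)$ over $\{(V_0,V_1):j\in V_0\cup V_1\}$ (ties broken lexicographically). Then $\max_{1\le j\le p}|V_{0j}^*\cup V_{1j}^*|\le(\vartheta+r)^2/(2\vartheta r)$.
   Context: $Y=X\beta+\sigma z\in\mathbb R^n$, $X$ is $n\times p$, $z\sim N(0,I_n)$, $\sigma>0$ known. RD$(\vartheta,\kappa,\Omega)$: $n=p^\kappa$, rows of $X$ i.i.d. $N(0,\frac1n\Omega)$, $\Omega$ a correlation matrix. ARW$(\vartheta,r,a,\mu)$: $\epsilon_p=p^{-\vartheta}$, $\tau_p=\sigma\sqrt{2r\log p}$, $b$ i.i.d. Bernoulli$(\epsilon_p)$ independent of $(X,z)$, $\beta=b\circ\mu$, $\mu\in\Theta_p^*(\tau_p,a):=\{\mu:\tau_p\le|\mu_i|\le a\tau_p\ \forall i\}$. $\lambda_k^*(\Omega)$: minimal smallest eigenvalue of $k\times k$ principal submatrices; $g(m_0,\vartheta,r)$ is the smallest integer $\ge\max\{m_0,(\vartheta+r)^2/(2\vartheta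 r)\}$; $\mathcal M_p(c_0,g)$: correlation matrices with $\lambda_g^*(\Omega)\ge c_0$. For $V\subset\{1..p\}$ with indicator $I_V$, $B_V=\{I_V\circ\mu:\mu\in\Theta_p^*(\tau_p,a)\}$; $\alpha(\theta^{(0)},\theta^{(1)})=\tau_p^{-2}(\theta^{(0)}-\theta^{(1)})'\Omega(\theta^{(0)}-\theta^{(1)})$; $\alpha^*(V_0,V_1)=\min\{\alpha:\theta^{(i)}\in B_{V_i},\ \mathrm{sgn}(\theta^{(0)})\ne\mathrm{sgn}(\theta^{(1)})\}$; $\eta(V_0,V_1)=\max\{|V_0|,|V_1|\}\vartheta+\frac14[(\sqrt{\alpha^*r}-||V_1|-|V_0||\vartheta/\sqrt{\alpha^*r})_+]^2$ with $\alpha^*=\alpha^*(V_0,V_1)$ and $x_+=\max(x,0)$. *)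

theory Defs
  imports Complex_Main
begin

text \<open>Indices are 1..p; vectors are functions nat => real, matrices nat => nat => real.\<close>

definition qform :: "nat \<Rightarrow> (nat \<Rightarrow> nat \<Rightarrow> real) \<Rightarrow> (nat \<Rightarrow> real) \<Rightarrow> real" where
  "qform p \<Omega> x = (\<Sum>i\<in>{1..p}. \<Sum>j\<in>{1..p}. x i * \<Omega> i j * x j)"

definition correlation_matrix :: "nat \<Rightarrow> (nat \<Rightarrow> nat \<Rightarrow> real) \<Rightarrow> bool" where
  "correlation_matrix p \<Omega> \<longleftrightarrow>
     (\<forall>i\<in>{1..p}. \<forall>j\<in>{1..p}. \<Omega> i j = \<Omega> j i) \<and>
     (\<forall>i\<in>{1..p}. \<Omega> i i = 1) \<and>
     (\<forall>x. qform p \<Omega> x \<ge> 0)"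

definition eigvals_sub :: "(nat \<Rightarrow> nat \<Rightarrow> real) \<Rightarrow> nat set \<Rightarrow> real set" where
  "eigvals_sub \<Omega> S = {l. \<exists>x::nat \<Rightarrow> real. (\<forall>i. i \<notin> S \<longrightarrow> x i = 0) \<and> (\<exists>i\<in>S. x i \<noteq> 0) \<and>
       (\<forall>i\<in>S. (\<Sum>j\<in>S. \<Omega> i j * x j) = l * x i)}"

definition lambda_min_sub :: "(nat \<Rightarrow> nat \<Rightarrow> real) \<Rightarrow> nat set \<Rightarrow> real" where
  "lambda_min_sub \<Omega> S = Min (eigvals_sub \<Omega> S)"

definition lambda_star :: "nat \<Rightarrow> (nat \<Rightarrow> nat \<Rightarrow> real) \<Rightarrow> nat \<Rightarrow> real" where
  "lambda_star p \<Omega> k = Min {lambda_min_sub \<Omega> S | S. S \<subseteq> {1..p} \<and> card S = k}"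

definition M_p :: "nat \<Rightarrow> real \<Rightarrow> nat \<Rightarrow> (nat \<Rightarrow> nat \<Rightarrow> real) set" where
  "M_p p c0 g = {\<Omega>. correlation_matrix p \<Omega> \<and> lambda_star p \<Omega> g \<ge> c0}"

definition g_fun :: "nat \<Rightarrow> real \<Rightarrow> real \<Rightarrow> nat" where
  "g_fun m0 \<theta> r = nat \<lceil>max (real m0) ((\<theta> + r)\<^sup>2 / (2 * \<theta> * r))\<rceil>"

definition Theta_star :: "nat \<Rightarrow> real \<Rightarrow> real \<Rightarrow> (nat \<Rightarrow> real) set" where
  "Theta_star p \<tau> a = {\<mu>. \<forall>i\<in>{1..p}. \<tau> \<le> \<bar>\<mu> i\<bar> \<and> \<bar>\<mu> i\<bar> \<le> a * \<tau>}"

definition B_set :: "nat \<Rightarrow> real \<Rightarrow> real \<Rightarrow> nat set \<Rightarrow> (nat \<Rightarrow> real) set" where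
  "B_set p \<tau> a V = {(\<lambda>i. if i \<in> V then \<mu> i else 0) | \<mu>. \<mu> \<in> Theta_star p \<tau> a}"

definition alpha :: "nat \<Rightarrow> (nat \<Rightarrow> nat \<Rightarrow> real) \<Rightarrow> real \<Rightarrow> (nat \<Rightarrow> real) \<Rightarrow> (nat \<Rightarrow> real) \<Rightarrow> real" where
  "alpha p \<Omega> \<tau> \<theta>0 \<theta>1 = qform p \<Omega> (\<lambda>i. \<theta>0 i - \<theta>1 i) / \<tau>\<^sup>2"

definition alpha_star :: "nat \<Rightarrow> (nat \<Rightarrow> nat \<Rightarrow> real) \<Rightarrow> real \<Rightarrow> real \<Rightarrow> nat set \<Rightarrow> nat set \<Rightarrow> real" where
  "alpha_star p \<Omega> \<tau> a V0 V1 = Inf {alpha p \<Omega> \<tau> \<theta>0 \<theta>1 | \<theta>0 \<theta>1.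
       \<theta>0 \<in> B_set p \<tau> a V0 \<and> \<theta>1 \<in> B_set p \<tau> a V1 \<and> (\<lambda>i. sgn (\<theta>0 i)) \<noteq> (\<lambda>i. sgn (\<theta>1 i))}"

definition eta :: "nat \<Rightarrow> (nat \<Rightarrow> nat \<Rightarrow> real) \<Rightarrow> real \<Rightarrow> real \<Rightarrow> real \<Rightarrow> real \<Rightarrow> nat set \<Rightarrow> nat set \<Rightarrow> real" where
  "eta p \<Omega> \<tau> a \<theta> r V0 V1 =
     (let A = alpha_star p \<Omega> \<tau> a V0 V1;
          d = \<bar>real (card V1) - real (card V0)\<bar>
      in real (max (card V0) (card V1)) * \<theta>
         + (1/4) * (max 0 (sqrt (A * r) - d * \<theta> / sqrt (A * r)))\<^sup>2)"

definition tau_p :: "real \<Rightarrow> real \<Rightarrow> nat \<Rightarrow> real" where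
  "tau_p \<sigma> r p = \<sigma> * sqrt (2 * r * ln (real p))"

definition pairs_j :: "nat \<Rightarrow> nat \<Rightarrow> (nat set \<times> nat set) set" where
  "pairs_j p j = {(V0, V1). V0 \<subseteq> {1..p} \<and> V1 \<subseteq> {1..p} \<and> j \<in> V0 \<union> V1}"

end

theory Submission
  imports Defs
begin

text \<open>Every minimizer of \<open>\<eta>\<close> over pairs containing \<open>j\<close> is no worse than the competitor
  \<open>({j}, {})\<close>. For that pair \<open>\<alpha>\<^sup>* = 1\<close> (the unit diagonal of \<open>\<Omega>\<close>), so its \<open>\<eta>\<close> is at most
  \<open>(\<vartheta> + r)\<^sup>2 / (4r)\<close>. On the other hand \<open>\<eta>(V\<^sub>0, V\<^sub>1) \<ge> max(|V\<^sub>0|, |V\<^sub>1|) \<vartheta> \<ge> |V\<^sub>0 \<union> V\<^sub>1| \<vartheta> / 2\<close>,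
  and the two bounds combine to the claim.\<close>

lemma qform_single:
  assumes "j \<in> {1..p}"
  shows "qform p \<Omega> (\<lambda>i. if i = j then c else 0) = c\<^sup>2 * \<Omega> j j"
proof -
  have row: "(\<Sum>k\<in>{1..p}. c * \<Omega> j k * (if k = j then c else 0)) = c * \<Omega> j j * c"
  proof -
    have "(\<Sum>k\<in>{1..p}. c * \<Omega> j k * (if k = j then c else 0))
        = (\<Sum>k\<in>{1..p}. if k = j then c * \<Omega> j j * c else 0)"
      by (intro sum.cong) auto
    then show ?thesis
      using assms by (simp add: sum.delta)
  qed
  have "qform p \<Omega> (\<lambda>i. if i = j then c else 0)
      = (\<Sum>i\<in>{1..p}. if i = j then c * \<Omega> j j * c else 0)"
    unfolding qform_def using row by (intro sum.cong) auto
  also have "\<dots> = c\<^sup>2 * \<Omega> j j"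
    using assms by (simp add: sum.delta power2_eq_square)
  finally show ?thesis .
qed

lemma const_in_Theta_star:
  assumes "0 \<le> \<tau>" "1 \<le> a"
  shows "(\<lambda>i. \<tau>) \<in> Theta_star p \<tau> a"
  using mult_right_mono[OF assms(2,1)] assms(1) unfolding Theta_star_def by simp

lemma B_set_empty:
  assumes "0 \<le> \<tau>" "1 \<le> a"
  shows "B_set p \<tau> a {} = {\<lambda>i. 0}"
  unfolding B_set_def using const_in_Theta_star[OF assms] by auto

lemma alpha_singleton_zero:
  assumes "correlation_matrix p \<Omega>" "j \<in> {1..p}"
  shows "alpha p \<Omega> \<tau> (\<lambda>i. if i \<in> {j} then \<mu> i else 0) (\<lambda>i. 0) = (\<mu> j)\<^sup>2 / \<tau>\<^sup>2"
proof -
  have "\<Omega> j j = 1"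
    using assms unfolding correlation_matrix_def by auto
  moreover have "(\<lambda>i. (if i \<in> {j} then \<mu> i else 0) - 0) = (\<lambda>i. if i = j then \<mu> j else 0)"
    by auto
  ultimately show ?thesis
    unfolding alpha_def using qform_single[OF assms(2)] by simp
qed

lemma alpha_star_singleton:
  assumes "correlation_matrix p \<Omega>" "j \<in> {1..p}" "0 < \<tau>" "1 \<le> a"
  shows "alpha_star p \<Omega> \<tau> a {j} {} = 1"
proof -
  note alpha_single = alpha_singleton_zero[OF assms(1,2)]
  have B0: "B_set p \<tau> a {} = {\<lambda>i. 0}"
    using B_set_empty assms(3,4) by simp
  let ?S = "{alpha p \<Omega> \<tau> \<theta>0 \<theta>1 | \<theta>0 \<theta>1. \<theta>0 \<in> B_set p \<tau> a {j} \<and> \<theta>1 \<in> B_set p \<tau> a {}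
      \<and> (\<lambda>i. sgn (\<theta>0 i)) \<noteq> (\<lambda>i. sgn (\<theta>1 i))}"
  have attained: "1 \<in> ?S"
  proof -
    let ?\<theta>0 = "\<lambda>i. if i \<in> {j} then \<tau> else 0"
    have "?\<theta>0 \<in> B_set p \<tau> a {j}"
      unfolding B_set_def using const_in_Theta_star assms(3,4) by fastforce
    moreover have "(\<lambda>i. 0::real) \<in> B_set p \<tau> a {}"
      using B0 by simp
    moreover have "(\<lambda>i. sgn (?\<theta>0 i)) \<noteq> (\<lambda>i. sgn ((\<lambda>i. 0::real) i))"
      using assms(3) by (auto dest: fun_cong[of _ _ j])
    moreover have "alpha p \<Omega> \<tau> ?\<theta>0 (\<lambda>i. 0) = 1"
      using alpha_single[where \<mu> = "\<lambda>i. \<tau>"] assms(3) by simp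
    ultimately show ?thesis
      by (intro CollectI exI[of _ ?\<theta>0] exI[of _ "\<lambda>i. 0::real"]) simp
  qed
  have lower: "1 \<le> x" if "x \<in> ?S" for x
  proof -
    from that obtain \<theta>0 \<theta>1 where x: "x = alpha p \<Omega> \<tau> \<theta>0 \<theta>1"
      and \<theta>0: "\<theta>0 \<in> B_set p \<tau> a {j}" and \<theta>1: "\<theta>1 \<in> B_set p \<tau> a {}"
      by blast
    from \<theta>0 obtain \<mu> where \<mu>: "\<mu> \<in> Theta_star p \<tau> a"
      and \<theta>0_eq: "\<theta>0 = (\<lambda>i. if i \<in> {j} then \<mu> i else 0)"
      unfolding B_set_def by blast
    have "x = (\<mu> j)\<^sup>2 / \<tau>\<^sup>2"
      using x \<theta>0_eq \<theta>1 B0 alpha_single by simp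
    moreover have "\<tau>\<^sup>2 \<le> (\<mu> j)\<^sup>2"
    proof -
      have "\<tau> \<le> \<bar>\<mu> j\<bar>"
        using \<mu> assms(2) unfolding Theta_star_def by blast
      then have "\<tau>\<^sup>2 \<le> \<bar>\<mu> j\<bar>\<^sup>2"
        using assms(3) by (intro power_mono) auto
      then show ?thesis
        by simp
    qed
    ultimately show ?thesis
      using assms(3) by simp
  qed
  show ?thesis
    unfolding alpha_star_def by (rule cInf_eq_minimum[OF attained lower])
qed

lemma eta_singleton_le:
  assumes "alpha_star p \<Omega> \<tau> a {j} {} = 1" "0 < r"
  shows "eta p \<Omega> \<tau> a \<theta> r {j} {} \<le> (\<theta> + r)\<^sup>2 / (4 * r)"
proof -
  have eta: "eta p \<Omega> \<tau> a \<theta> r {j} {} = \<theta> + 1/4 * (max 0 (sqrt r - \<theta> / sqrt r))\<^sup>2"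
    unfolding eta_def Let_def assms(1) by simp
  show ?thesis
  proof (cases "0 \<le> sqrt r - \<theta> / sqrt r")
    case True
    have "(sqrt r - \<theta> / sqrt r)\<^sup>2 = r - 2 * \<theta> + \<theta>\<^sup>2 / r"
      using assms(2) by (simp add: power2_eq_square field_simps)
    then have "\<theta> + 1/4 * (sqrt r - \<theta> / sqrt r)\<^sup>2 = (\<theta> + r)\<^sup>2 / (4 * r)"
      using assms(2) by (simp add: power2_eq_square field_simps)
    with True show ?thesis
      using eta by simp
  next
    case False
    have "4 * r * \<theta> \<le> (\<theta> + r)\<^sup>2"
      using sum_squares_ge_zero[of "\<theta> - r" 0] by (simp add: power2_eq_square algebra_simps)
    with False show ?thesis
      using eta assms(2) by (simp add: field_simps)
  qed
qed

lemma card_le_eta: "real (max (card V0) (card V1)) * \<theta> \<le> eta p \<Omega> \<tau> a \<theta> r V0 V1"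
  unfolding eta_def Let_def by simp

lemma card_Un_le_twice_max: "card (A \<union> B) \<le> 2 * max (card A) (card B)"
  using card_Un_le[of A B] by linarith

lemma card_Un_bound_from_eta:
  assumes "0 < \<theta>" "0 < r"
    and "eta p \<Omega> \<tau> a \<theta> r V0 V1 \<le> (\<theta> + r)\<^sup>2 / (4 * r)"
  shows "real (card (V0 \<union> V1)) \<le> (\<theta> + r)\<^sup>2 / (2 * \<theta> * r)"
proof -
  have "real (card (V0 \<union> V1)) * \<theta> \<le> 2 * real (max (card V0) (card V1)) * \<theta>"
    using card_Un_le_twice_max[of V0 V1] assms(1) by (simp del: of_nat_max)
  also have "\<dots> \<le> 2 * ((\<theta> + r)\<^sup>2 / (4 * r))"
    using card_le_eta[of V0 V1 \<theta> p \<Omega> \<tau> a r] assms(3) by linarith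
  finally show ?thesis
    using assms(1,2) by (simp add: field_simps)
qed

lemma card_Un_le_of_eta_le_singleton:
  assumes "correlation_matrix p \<Omega>" "j \<in> {1..p}" "0 < \<tau>" "1 \<le> a" "0 < \<theta>" "0 < r"
    and "eta p \<Omega> \<tau> a \<theta> r V0 V1 \<le> eta p \<Omega> \<tau> a \<theta> r {j} {}"
  shows "real (card (V0 \<union> V1)) \<le> (\<theta> + r)\<^sup>2 / (2 * \<theta> * r)"
proof (rule card_Un_bound_from_eta[OF assms(5,6)])
  note assms(7)
  also have "eta p \<Omega> \<tau> a \<theta> r {j} {} \<le> (\<theta> + r)\<^sup>2 / (4 * r)"
    using eta_singleton_le[OF alpha_star_singleton[OF assms(1-4)] assms(6)] .
  finally show "eta p \<Omega> \<tau> a \<theta> r V0 V1 \<le> (\<theta> + r)\<^sup>2 / (4 * r)" .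
qed

lemma of_nat_Max_image_le:
  assumes "finite A" "A \<noteq> {}" "\<And>x. x \<in> A \<Longrightarrow> real (f x) \<le> b"
  shows "real (Max (f ` A)) \<le> b"
proof -
  have "Max (f ` A) \<in> f ` A"
    using assms(1,2) by (intro Max_in) auto
  then obtain x where "x \<in> A" "Max (f ` A) = f x"
    by blast
  with assms(3) show ?thesis
    by simp
qed

theorem lemma22:
  fixes \<theta> \<kappa> r a c0 \<sigma> :: real and m0 :: nat
  assumes "0 < \<theta>" "\<theta> < 1" "0 < \<kappa>" "\<kappa> < 1" "\<kappa> > 1 - \<theta>"
    and "r > 0" "a \<ge> 1" "m0 \<ge> 1" "c0 > 0" "\<sigma> > 0"
  shows "\<exists>P. \<forall>p \<ge> P. \<forall>\<Omega> \<in> M_p p c0 (g_fun m0 \<theta> r).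
           \<forall>Vstar :: nat \<Rightarrow> nat set \<times> nat set.
             (\<forall>j\<in>{1..p}. Vstar j \<in> pairs_j p j \<and>
                (\<forall>W \<in> pairs_j p j.
                   eta p \<Omega> (tau_p \<sigma> r p) a \<theta> r (fst (Vstar j)) (snd (Vstar j))
                   \<le> eta p \<Omega> (tau_p \<sigma> r p) a \<theta> r (fst W) (snd W)))
             \<longrightarrow> real (Max ((\<lambda>j. card (fst (Vstar j) \<union> snd (Vstar j))) ` {1..p}))
                 \<le> (\<theta> + r)\<^sup>2 / (2 * \<theta> * r)"
proof (intro exI[of _ 2] allI impI ballI)
  fix p :: nat and \<Omega> and Vstar :: "nat \<Rightarrow> nat set \<times> nat set"
  assume p: "2 \<le> p" and \<Omega>: "\<Omega> \<in> M_p p c0 (g_fun m0 \<theta> r)"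
  assume minimal: "\<forall>j\<in>{1..p}. Vstar j \<in> pairs_j p j \<and>
                (\<forall>W \<in> pairs_j p j.
                   eta p \<Omega> (tau_p \<sigma> r p) a \<theta> r (fst (Vstar j)) (snd (Vstar j))
                   \<le> eta p \<Omega> (tau_p \<sigma> r p) a \<theta> r (fst W) (snd W))"
  have corr: "correlation_matrix p \<Omega>"
    using \<Omega> unfolding M_p_def by simp
  have \<tau>: "0 < tau_p \<sigma> r p"
    unfolding tau_p_def using p assms(6,10) by simp
  show "real (Max ((\<lambda>j. card (fst (Vstar j) \<union> snd (Vstar j))) ` {1..p}))
      \<le> (\<theta> + r)\<^sup>2 / (2 * \<theta> * r)"
  proof (rule of_nat_Max_image_le)
    fix j assume j: "j \<in> {1..p}"
    then have "({j}, {}) \<in> pairs_j p j"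
      unfolding pairs_j_def by auto
    with minimal j have "eta p \<Omega> (tau_p \<sigma> r p) a \<theta> r (fst (Vstar j)) (snd (Vstar j))
        \<le> eta p \<Omega> (tau_p \<sigma> r p) a \<theta> r {j} {}"
      by (metis fst_conv snd_conv)
    then show "real (card (fst (Vstar j) \<union> snd (Vstar j))) \<le> (\<theta> + r)\<^sup>2 / (2 * \<theta> * r)"
      using card_Un_le_of_eta_le_singleton[OF corr j \<tau> assms(7,1,6)] by blast
  qed (use p in auto)
qed

end
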